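(* Let $H \in \mathcal{M}_n(\mathbb{C})$ be a Hermitian matrix whose largest eigenvalue (spectral radius) is simple. Then $H$ has exactly $k$ distinct eigenvalues, where $2 \le k \le n$, if and only if there are $k$ distinct real numbers $\lambda_1, \lambda_2, \ldots, \lambda_k$ such that (i) $H - \lambda_i I$ is a singular matrix for every $2 \le i \le k$; and (ii) $\prod_{i=2}^{k}(H - \lambda_i I) = b\,\mathbf{y}\mathbf{y}^\ast$ and $H\mathbf{y} = \lambda_1 \mathbf{y}$ for some $b \in \mathbb{C}\setminus\{0\}$ and some $\mathbf{y} \in \mathbb{C}^n \setminus \{\mathbf{0}\}$. Moreover, in this case $\lambda_1, \lambda_2, \ldots, \lambda_k$ are exactly the $k$ distinct eigenvalues of $H$.
   Context: $\mathcal{M}_n(\mathbb{C})$ is the set of $n\times n$ complex matrices, $I$ the identity matrix, $\mathbf{y}^\ast = \overline{\mathbf{y}}^T$. The spectral radius of a Hermitian matrix here means its largest eigenvalue; it is simple if its algebraic multiplicity is $1$. *)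

theory Defs
  imports "Jordan_Normal_Form.Schur_Decomposition"
begin

definition hermitian_mat :: "nat \<Rightarrow> complex mat \<Rightarrow> bool" where
  "hermitian_mat n H \<longleftrightarrow> H \<in> carrier_mat n n \<and> mat_adjoint H = H"

definition largest_eigenvalue_simple :: "complex mat \<Rightarrow> bool" where
  "largest_eigenvalue_simple H \<longleftrightarrow>
     (\<exists>r::real. eigenvalue H (complex_of_real r)
        \<and> (\<forall>\<mu>. eigenvalue H \<mu> \<longrightarrow> Re \<mu> \<le> r)
        \<and> Polynomial.order (complex_of_real r) (char_poly H) = 1)"

definition outer_adj :: "complex vec \<Rightarrow> complex mat" where
  "outer_adj y = mat (dim_vec y) (dim_vec y) (\<lambda>(i,j). y $ i * cnj (y $ j))"

definition shifted_prod :: "nat \<Rightarrow> complex mat \<Rightarrow> (nat \<Rightarrow> real) \<Rightarrow> nat \<Rightarrow> complex mat" where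
  "shifted_prod n H lam k =
     foldr (\<lambda>i M. (H - complex_of_real (lam i) \<cdot>\<^sub>m 1\<^sub>m n) * M) [2..<Suc k] (1\<^sub>m n)"

definition eig_conditions :: "nat \<Rightarrow> complex mat \<Rightarrow> nat \<Rightarrow> (nat \<Rightarrow> real) \<Rightarrow> bool" where
  "eig_conditions n H k lam \<longleftrightarrow>
     inj_on lam {1..k}
     \<and> (\<forall>i\<in>{2..k}. det (H - complex_of_real (lam i) \<cdot>\<^sub>m 1\<^sub>m n) = 0)
     \<and> (\<exists>b y. b \<noteq> 0 \<and> y \<in> carrier_vec n \<and> y \<noteq> 0\<^sub>v n
          \<and> shifted_prod n H lam k = b \<cdot>\<^sub>m outer_adj y
          \<and> H *\<^sub>v y = complex_of_real (lam 1) \<cdot>\<^sub>v y)"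

end

theory Submission
  imports Defs "Jordan_Normal_Form.Jordan_Normal_Form_Uniqueness" "Jordan_Normal_Form.Jordan_Normal_Form_Existence"
begin

text \<open>
  A Hermitian matrix has real eigenvalues, and its Jordan blocks all have size one because
  \<open>ker A\<^sup>2 = ker A\<close> for self-adjoint \<open>A\<close>; so \<open>H = P D Q\<close> with \<open>D\<close> diagonal.
  If \<open>\<lambda>\<^sub>2, \<dots>, \<lambda>\<^sub>k\<close> are the eigenvalues other than the simple eigenvalue \<open>\<lambda>\<^sub>1\<close>, then
  \<open>\<Prod>(H - \<lambda>\<^sub>i I) = P (\<Prod>(D - \<lambda>\<^sub>i I)) Q\<close> and the diagonal product has a single nonzero entry,
  at the position of \<open>\<lambda>\<^sub>1\<close>. Hence the product is a Hermitian rank-one matrix, i.e. \<open>b y y\<^sup>*\<close>,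
  with \<open>y\<close> the corresponding column of \<open>P\<close>, an eigenvector for \<open>\<lambda>\<^sub>1\<close>.
  Conversely, if \<open>\<mu> \<notin> {\<lambda>\<^sub>1, \<dots>, \<lambda>\<^sub>k}\<close> had an eigenvector \<open>v\<close>, the product would map \<open>v\<close> to a nonzero
  multiple of \<open>v\<close> lying on the line of \<open>y\<close>, forcing \<open>\<mu> = \<lambda>\<^sub>1\<close>.
\<close>

section \<open>Hermitian matrices\<close>

lemma hermitian_mat_carrier: "hermitian_mat n H \<Longrightarrow> H \<in> carrier_mat n n"
  unfolding hermitian_mat_def by blast

lemma hermitian_mat_entry:
  assumes "hermitian_mat n H" "i < n" "j < n"
  shows "H $$ (i,j) = cnj (H $$ (j,i))"
proof -
  have C: "H \<in> carrier_mat n n" and adj: "mat_adjoint H = H"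
    using assms(1) unfolding hermitian_mat_def by auto
  have "mat_adjoint H $$ (i,j) = cnj (H $$ (j,i))"
    using C assms(2,3) by (simp add: mat_adjoint_def mat_of_rows_def)
  then show ?thesis unfolding adj .
qed

lemma hermitian_matI:
  assumes "H \<in> carrier_mat n n" "\<And>i j. i < n \<Longrightarrow> j < n \<Longrightarrow> H $$ (i,j) = cnj (H $$ (j,i))"
  shows "hermitian_mat n H"
  unfolding hermitian_mat_def
proof
  show "mat_adjoint H = H"
  proof (rule eq_matI)
    fix i j assume "i < dim_row H" "j < dim_col H"
    then show "mat_adjoint H $$ (i,j) = H $$ (i,j)"
      using assms(1) assms(2)[of i j] by (simp add: mat_adjoint_def mat_of_rows_def)
  qed (use assms(1) in \<open>simp_all add: mat_adjoint_def\<close>)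
qed (fact assms(1))

lemma hermitian_mat_sprod:
  assumes H: "hermitian_mat n H" and v: "v \<in> carrier_vec n" and w: "w \<in> carrier_vec n"
  shows "(H *\<^sub>v v) \<bullet>c w = v \<bullet>c (H *\<^sub>v w)"
proof -
  have C: "H \<in> carrier_mat n n" using hermitian_mat_carrier[OF H] .
  have "(H *\<^sub>v v) \<bullet>c w = (\<Sum>i<n. (\<Sum>j<n. H $$ (i,j) * v $ j) * cnj (w $ i))"
    using C v w by (simp add: scalar_prod_def mult_mat_vec_def row_def lessThan_atLeast0)
  also have "\<dots> = (\<Sum>i<n. \<Sum>j<n. v $ j * (cnj (H $$ (j,i)) * cnj (w $ i)))"
  proof (intro sum.cong refl)
    fix i assume i: "i \<in> {..<n}"
    have "H $$ (i,j) * v $ j * cnj (w $ i) = v $ j * (cnj (H $$ (j,i)) * cnj (w $ i))"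
      if "j \<in> {..<n}" for j
    proof -
      have "H $$ (i,j) = cnj (H $$ (j,i))" using hermitian_mat_entry[OF H, of i j] i that by simp
      then show ?thesis by (simp add: ac_simps)
    qed
    then show "(\<Sum>j<n. H $$ (i,j) * v $ j) * cnj (w $ i) = (\<Sum>j<n. v $ j * (cnj (H $$ (j,i)) * cnj (w $ i)))"
      unfolding sum_distrib_right by (rule sum.cong[OF refl])
  qed
  also have "\<dots> = (\<Sum>j<n. v $ j * cnj (\<Sum>i<n. H $$ (j,i) * w $ i))"
    by (subst sum.swap) (simp add: sum_distrib_left)
  also have "\<dots> = v \<bullet>c (H *\<^sub>v w)"
    using C v w by (simp add: scalar_prod_def mult_mat_vec_def row_def lessThan_atLeast0)
  finally show ?thesis .
qed

lemma hermitian_matI_sprod: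
  assumes M: "M \<in> carrier_mat n n"
    and adj: "\<And>v w. v \<in> carrier_vec n \<Longrightarrow> w \<in> carrier_vec n \<Longrightarrow> (M *\<^sub>v v) \<bullet>c w = v \<bullet>c (M *\<^sub>v w)"
  shows "hermitian_mat n M"
proof (rule hermitian_matI[OF M])
  have unit: "conjugate (unit_vec n i) = (unit_vec n i :: complex vec)" for i
    by (intro eq_vecI) (auto simp: unit_vec_def)
  fix i j assume ij: "i < n" "j < n"
  have "M $$ (i,j) = (M *\<^sub>v unit_vec n j) \<bullet>c unit_vec n i"
    using M ij by (simp add: unit scalar_prod_right_unit)
  also have "\<dots> = unit_vec n j \<bullet>c (M *\<^sub>v unit_vec n i)" by (rule adj) auto
  also have "\<dots> = cnj (M $$ (j,i))" using M ij by (simp add: scalar_prod_left_unit)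
  finally show "M $$ (i,j) = cnj (M $$ (j,i))" .
qed

lemma hermitian_mat_mult_commuting:
  assumes A: "hermitian_mat n A" and B: "hermitian_mat n B" and AB: "A * B = B * A"
  shows "hermitian_mat n (A * B)"
proof -
  have Ac: "A \<in> carrier_mat n n" and Bc: "B \<in> carrier_mat n n"
    using A B by (simp_all add: hermitian_mat_carrier)
  show ?thesis
  proof (rule hermitian_matI_sprod)
    fix v w :: "complex vec" assume v: "v \<in> carrier_vec n" and w: "w \<in> carrier_vec n"
    have "((A * B) *\<^sub>v v) \<bullet>c w = (B *\<^sub>v v) \<bullet>c (A *\<^sub>v w)"
      using Ac Bc v w by (simp add: hermitian_mat_sprod[OF A])
    also have "\<dots> = v \<bullet>c ((B * A) *\<^sub>v w)"
      using Ac Bc v w by (simp add: hermitian_mat_sprod[OF B])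
    finally show "((A * B) *\<^sub>v v) \<bullet>c w = v \<bullet>c ((A * B) *\<^sub>v w)" unfolding AB .
  qed (use Ac Bc in simp)
qed

lemma hermitian_mat_minus_real_smult_one:
  assumes "hermitian_mat n H"
  shows "hermitian_mat n (H - complex_of_real r \<cdot>\<^sub>m 1\<^sub>m n)"
proof (rule hermitian_matI)
  show "H - complex_of_real r \<cdot>\<^sub>m 1\<^sub>m n \<in> carrier_mat n n"
    using hermitian_mat_carrier[OF assms] by (intro minus_carrier_mat) simp
  have entry: "(H - complex_of_real r \<cdot>\<^sub>m 1\<^sub>m n) $$ (i,j) = H $$ (i,j) - (if i = j then r else 0)"
    if "i < n" "j < n" for i j
    using hermitian_mat_carrier[OF assms] that by simp
  fix i j assume ij: "i < n" "j < n"
  show "(H - complex_of_real r \<cdot>\<^sub>m 1\<^sub>m n) $$ (i,j) = cnj ((H - complex_of_real r \<cdot>\<^sub>m 1\<^sub>m n) $$ (j,i))"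
    unfolding entry[OF ij] entry[OF ij(2,1)] hermitian_mat_entry[OF assms ij] by simp
qed

lemma hermitian_eigenvalue_real:
  assumes H: "hermitian_mat n H" and ev: "eigenvalue H \<mu>"
  shows "complex_of_real (Re \<mu>) = \<mu>"
proof -
  obtain v where v: "v \<in> carrier_vec n" "v \<noteq> 0\<^sub>v n" "H *\<^sub>v v = \<mu> \<cdot>\<^sub>v v"
    using ev hermitian_mat_carrier[OF H] unfolding eigenvalue_def eigenvector_def by auto
  have "\<mu> * (v \<bullet>c v) = (H *\<^sub>v v) \<bullet>c v" using v by simp
  also have "\<dots> = v \<bullet>c (H *\<^sub>v v)" using hermitian_mat_sprod[OF H v(1) v(1)] .
  also have "\<dots> = cnj \<mu> * (v \<bullet>c v)" using v by (simp add: conjugate_smult_vec)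
  finally have "\<mu> = cnj \<mu>" using v by simp
  then have "Im \<mu> = 0" by (metis cnj.simps(2) neg_equal_zero)
  then show ?thesis by (simp add: complex_eq_iff)
qed

lemma hermitian_mat_kernel_square:
  assumes A: "hermitian_mat n A"
  shows "mat_kernel (A ^\<^sub>m 2) = mat_kernel (A ^\<^sub>m 1)"
proof -
  have Ac: "A \<in> carrier_mat n n" using hermitian_mat_carrier[OF A] .
  have "v \<in> mat_kernel A" if "v \<in> mat_kernel (A * A)" for v
  proof -
    have v: "v \<in> carrier_vec n" and AAv: "A *\<^sub>v (A *\<^sub>v v) = 0\<^sub>v n"
      using that Ac by (auto simp: mat_kernel_def)
    have Av: "A *\<^sub>v v \<in> carrier_vec n" using Ac v by simp
    have "(A *\<^sub>v v) \<bullet>c (A *\<^sub>v v) = v \<bullet>c (A *\<^sub>v (A *\<^sub>v v))"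
      using hermitian_mat_sprod[OF A v Av] .
    also have "\<dots> = 0" unfolding AAv using v by simp
    finally have "A *\<^sub>v v = 0\<^sub>v n" using Av by simp
    then show ?thesis using v Ac by (intro mat_kernelI) auto
  qed
  moreover have "A ^\<^sub>m 2 = A * A" "A ^\<^sub>m 1 = A" using Ac by (simp_all add: numeral_2_eq_2)
  ultimately show ?thesis using mat_kernel_mult_subset[OF Ac Ac] by auto
qed

lemma hermitian_rank_one_outer_adj:
  assumes H: "hermitian_mat n (mat n n (\<lambda>(i, l). y $ i * w l))" and y: "y \<in> carrier_vec n"
    and i0: "i0 < n" "y $ i0 \<noteq> 0" and l0: "l0 < n" "w l0 \<noteq> 0"
  shows "\<exists>b. b \<noteq> 0 \<and> mat n n (\<lambda>(i, l). y $ i * w l) = b \<cdot>\<^sub>m outer_adj y"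
proof -
  define b where "b = cnj (w i0) / y $ i0"
  have w: "w l = b * cnj (y $ l)" if l: "l < n" for l
  proof -
    have "y $ i0 * w l = cnj (y $ l * w i0)"
      using hermitian_mat_entry[OF H i0(1) l] i0(1) l by simp
    then show ?thesis unfolding b_def using i0(2) by (simp add: field_simps)
  qed
  have "b \<noteq> 0" using w[OF l0(1)] l0(2) by auto
  moreover have "mat n n (\<lambda>(i, l). y $ i * w l) = b \<cdot>\<^sub>m outer_adj y"
    using y by (intro eq_matI) (auto simp: outer_adj_def w)
  ultimately show ?thesis by blast
qed

lemma outer_adj_mult_vec:
  "y \<in> carrier_vec n \<Longrightarrow> v \<in> carrier_vec n \<Longrightarrow> outer_adj y *\<^sub>v v = (v \<bullet>c y) \<cdot>\<^sub>v y"
  by (intro eq_vecI) (auto simp: outer_adj_def scalar_prod_def sum_distrib_left ac_simps)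

section \<open>Products of shifted matrices\<close>

definition shift_prod :: "nat \<Rightarrow> complex mat \<Rightarrow> (nat \<Rightarrow> complex) \<Rightarrow> nat list \<Rightarrow> complex mat" where
  "shift_prod n H c xs = foldr (\<lambda>i M. (H - c i \<cdot>\<^sub>m 1\<^sub>m n) * M) xs (1\<^sub>m n)"

lemma shift_prod_Nil [simp]: "shift_prod n H c [] = 1\<^sub>m n"
  unfolding shift_prod_def by simp

lemma shift_prod_Cons [simp]: "shift_prod n H c (i # xs) = (H - c i \<cdot>\<^sub>m 1\<^sub>m n) * shift_prod n H c xs"
  unfolding shift_prod_def by simp

lemma shifted_prod_eq_shift_prod:
  "shifted_prod n H lam k = shift_prod n H (\<lambda>i. complex_of_real (lam i)) [2..<Suc k]"
  unfolding shifted_prod_def shift_prod_def ..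

lemma shift_prod_carrier [simp]: "H \<in> carrier_mat n n \<Longrightarrow> shift_prod n H c xs \<in> carrier_mat n n"
  by (induction xs) auto

lemma smult_vec_right_cancel:
  fixes a b :: "'a :: idom"
  assumes v: "v \<in> carrier_vec n" "v \<noteq> 0\<^sub>v n" and eq: "a \<cdot>\<^sub>v v = b \<cdot>\<^sub>v v"
  shows "a = b"
proof -
  obtain i where i: "i < n" "v $ i \<noteq> 0" using v by (metis eq_vecI carrier_vecD index_zero_vec)
  have "a * v $ i = b * v $ i" using arg_cong[OF eq, of "\<lambda>w. w $ i"] i v by simp
  then show ?thesis using i(2) by simp
qed

lemma smult_mat_mult_vec:
  "A \<in> carrier_mat nr nc \<Longrightarrow> v \<in> carrier_vec nc \<Longrightarrow> (a \<cdot>\<^sub>m A) *\<^sub>v v = (a :: 'a :: comm_semiring_0) \<cdot>\<^sub>v (A *\<^sub>v v)"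
  by (intro eq_vecI) (auto simp: scalar_prod_def sum_distrib_left mult.assoc)

lemma minus_smult_one_mult_eigenvector:
  fixes H :: "complex mat"
  assumes H: "H \<in> carrier_mat n n" and v: "v \<in> carrier_vec n" and Hv: "H *\<^sub>v v = \<mu> \<cdot>\<^sub>v v"
  shows "(H - a \<cdot>\<^sub>m 1\<^sub>m n) *\<^sub>v v = (\<mu> - a) \<cdot>\<^sub>v v"
proof -
  have "(H - a \<cdot>\<^sub>m 1\<^sub>m n) *\<^sub>v v = H *\<^sub>v v - (a \<cdot>\<^sub>m 1\<^sub>m n) *\<^sub>v v"
    using H v by (intro minus_mult_distrib_mat_vec[of _ n n]) auto
  also have "(a \<cdot>\<^sub>m 1\<^sub>m n) *\<^sub>v v = a \<cdot>\<^sub>v v"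
    using v by (simp add: smult_mat_mult_vec[of _ n n])
  also have "H *\<^sub>v v - a \<cdot>\<^sub>v v = (\<mu> - a) \<cdot>\<^sub>v v"
    unfolding Hv using v H by (intro eq_vecI) (auto simp: algebra_simps)
  finally show ?thesis .
qed

lemma shift_prod_mult_eigenvector:
  assumes H: "H \<in> carrier_mat n n" and v: "v \<in> carrier_vec n" and Hv: "H *\<^sub>v v = \<mu> \<cdot>\<^sub>v v"
  shows "shift_prod n H c xs *\<^sub>v v = (\<Prod>i\<leftarrow>xs. \<mu> - c i) \<cdot>\<^sub>v v"
proof (induction xs)
  case (Cons i xs)
  have "shift_prod n H c (i # xs) *\<^sub>v v = (H - c i \<cdot>\<^sub>m 1\<^sub>m n) *\<^sub>v ((\<Prod>i\<leftarrow>xs. \<mu> - c i) \<cdot>\<^sub>v v)"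
    unfolding shift_prod_Cons using H v
    by (subst assoc_mult_mat_vec[of _ n n _ n]) (auto simp: Cons.IH minus_carrier_mat)
  also have "\<dots> = (\<Prod>i\<leftarrow>xs. \<mu> - c i) \<cdot>\<^sub>v ((H - c i \<cdot>\<^sub>m 1\<^sub>m n) *\<^sub>v v)"
    using H v by (intro mult_mat_vec[of _ n n]) (auto simp: minus_carrier_mat)
  also have "\<dots> = (\<Prod>i\<leftarrow>i # xs. \<mu> - c i) \<cdot>\<^sub>v v"
    unfolding minus_smult_one_mult_eigenvector[OF H v Hv] by (simp add: smult_smult_assoc ac_simps)
  finally show ?case .
qed (use v in simp)

lemma commute_minus_smult_one:
  fixes A B :: "complex mat"
  assumes A: "A \<in> carrier_mat n n" and B: "B \<in> carrier_mat n n" and AB: "A * B = B * A"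
  shows "A * (B - c \<cdot>\<^sub>m 1\<^sub>m n) = (B - c \<cdot>\<^sub>m 1\<^sub>m n) * A"
proof -
  have "A * (B - c \<cdot>\<^sub>m 1\<^sub>m n) = A * B - c \<cdot>\<^sub>m A"
    using A B by (simp add: mult_minus_distrib_mat[of _ n n] mult_smult_distrib[of _ n n _ n])
  also have "\<dots> = (B - c \<cdot>\<^sub>m 1\<^sub>m n) * A"
    using A B by (simp add: AB minus_mult_distrib_mat[of _ n n] mult_smult_assoc_mat[of _ n n _ n])
  finally show ?thesis .
qed

lemma shift_prod_commute:
  assumes H: "H \<in> carrier_mat n n"
  shows "shift_prod n H c xs * H = H * shift_prod n H c xs"
proof (induction xs)
  case (Cons i xs)
  let ?A = "H - c i \<cdot>\<^sub>m 1\<^sub>m n" and ?S = "shift_prod n H c xs"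
  have A: "?A \<in> carrier_mat n n" using H by (simp add: minus_carrier_mat)
  have S: "?S \<in> carrier_mat n n" using H by simp
  have "?A * ?S * H = ?A * (H * ?S)" by (simp add: assoc_mult_mat[OF A S H] Cons.IH)
  also have "\<dots> = ?A * H * ?S" using assoc_mult_mat[OF A H S] by simp
  also have "?A * H = H * ?A" using commute_minus_smult_one[OF H H refl] by simp
  also have "H * ?A * ?S = H * (?A * ?S)" by (rule assoc_mult_mat[OF H A S])
  finally show ?case by simp
qed (use H in simp)

lemma hermitian_shift_prod:
  assumes H: "hermitian_mat n H"
  shows "hermitian_mat n (shift_prod n H (\<lambda>i. complex_of_real (r i)) xs)"
proof (induction xs)
  case Nil
  show ?case by (rule hermitian_matI) auto
next
  case (Cons i xs)
  have C: "H \<in> carrier_mat n n" using hermitian_mat_carrier[OF H] .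
  show ?case unfolding shift_prod_Cons
  proof (rule hermitian_mat_mult_commuting[OF hermitian_mat_minus_real_smult_one[OF H] Cons.IH])
    show "(H - complex_of_real (r i) \<cdot>\<^sub>m 1\<^sub>m n) * shift_prod n H (\<lambda>i. complex_of_real (r i)) xs =
      shift_prod n H (\<lambda>i. complex_of_real (r i)) xs * (H - complex_of_real (r i) \<cdot>\<^sub>m 1\<^sub>m n)"
      using C by (intro commute_minus_smult_one[symmetric] shift_prod_commute) (auto simp: minus_carrier_mat)
  qed
qed

lemma shift_prod_similar:
  assumes H: "H \<in> carrier_mat n n" and sim: "similar_mat_wit H B P Q"
  shows "shift_prod n H c xs = P * shift_prod n B c xs * Q"
proof -
  from similar_mat_witD2[OF H sim] have PQ: "P * Q = 1\<^sub>m n" and QP: "Q * P = 1\<^sub>m n"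
    and HB: "H = P * B * Q" and B: "B \<in> carrier_mat n n"
    and P: "P \<in> carrier_mat n n" and Q: "Q \<in> carrier_mat n n" by auto
  have shift: "H - a \<cdot>\<^sub>m 1\<^sub>m n = P * (B - a \<cdot>\<^sub>m 1\<^sub>m n) * Q" for a
  proof -
    have "P * (B - a \<cdot>\<^sub>m 1\<^sub>m n) = P * B - a \<cdot>\<^sub>m P"
      using P B by (simp add: mult_minus_distrib_mat[of _ n n] mult_smult_distrib[of _ n n _ n])
    then have "P * (B - a \<cdot>\<^sub>m 1\<^sub>m n) * Q = (P * B - a \<cdot>\<^sub>m P) * Q" by simp
    also have "\<dots> = P * B * Q - a \<cdot>\<^sub>m (P * Q)"
      using P B Q by (simp add: minus_mult_distrib_mat[of _ n n] mult_smult_assoc_mat[of _ n n _ n])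
    finally show ?thesis by (simp add: HB PQ)
  qed
  show ?thesis
  proof (induction xs)
    case (Cons i xs)
    let ?A = "B - c i \<cdot>\<^sub>m 1\<^sub>m n" and ?S = "shift_prod n B c xs"
    have A: "?A \<in> carrier_mat n n" and S: "?S \<in> carrier_mat n n"
      using B by (simp_all add: minus_carrier_mat)
    have "shift_prod n H c (i # xs) = P * ?A * Q * (P * ?S * Q)"
      by (simp add: shift Cons.IH)
    also have "\<dots> = P * (?A * (Q * P) * ?S) * Q"
      using P Q A S by (simp add: assoc_mult_mat[of _ n n _ n _ n])
    also have "?A * (Q * P) = ?A" unfolding QP using A by simp
    finally show ?case by simp
  qed (use P Q in \<open>simp add: PQ\<close>)
qed

lemma shift_prod_mat_diag:
  "shift_prod n (mat_diag n d) c xs = mat_diag n (\<lambda>j. \<Prod>i\<leftarrow>xs. d j - c i)"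
proof (induction xs)
  case (Cons i xs)
  have "mat_diag n d - c i \<cdot>\<^sub>m 1\<^sub>m n = mat_diag n (\<lambda>j. d j - c i)"
    by (intro eq_matI) (auto simp: mat_diag_def)
  then show ?case by (simp add: Cons.IH)
qed simp

lemma eigenvalue_eq_if_shift_prod_outer_adj:
  assumes C: "H \<in> carrier_mat n n" and y: "y \<in> carrier_vec n"
    and prod: "shift_prod n H c xs = b \<cdot>\<^sub>m outer_adj y" and Hy: "H *\<^sub>v y = e \<cdot>\<^sub>v y"
    and v: "v \<in> carrier_vec n" "v \<noteq> 0\<^sub>v n" and Hv: "H *\<^sub>v v = \<mu> \<cdot>\<^sub>v v"
    and nonzero: "(\<Prod>i\<leftarrow>xs. \<mu> - c i) \<noteq> 0"
  shows "\<mu> = e"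
proof -
  define p where "p = (\<Prod>i\<leftarrow>xs. \<mu> - c i)"
  have pv: "p \<cdot>\<^sub>v v = (b * (v \<bullet>c y)) \<cdot>\<^sub>v y"
  proof -
    have "p \<cdot>\<^sub>v v = shift_prod n H c xs *\<^sub>v v"
      unfolding p_def using shift_prod_mult_eigenvector[OF C v(1) Hv] ..
    also have "\<dots> = b \<cdot>\<^sub>v (outer_adj y *\<^sub>v v)"
      unfolding prod using y v(1) by (intro smult_mat_mult_vec) (auto simp: outer_adj_def)
    also have "\<dots> = (b * (v \<bullet>c y)) \<cdot>\<^sub>v y"
      unfolding outer_adj_mult_vec[OF y v(1)] by (simp add: smult_smult_assoc)
    finally show ?thesis .
  qed
  have "(p * \<mu>) \<cdot>\<^sub>v v = p \<cdot>\<^sub>v (H *\<^sub>v v)" unfolding Hv by (simp add: smult_smult_assoc ac_simps)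
  also have "\<dots> = H *\<^sub>v (p \<cdot>\<^sub>v v)" using C v by (simp add: mult_mat_vec)
  also have "\<dots> = (b * (v \<bullet>c y)) \<cdot>\<^sub>v (H *\<^sub>v y)" unfolding pv using C y by (simp add: mult_mat_vec)
  also have "\<dots> = e \<cdot>\<^sub>v (p \<cdot>\<^sub>v v)" unfolding Hy pv by (simp add: smult_smult_assoc ac_simps)
  also have "\<dots> = (p * e) \<cdot>\<^sub>v v" by (simp add: smult_smult_assoc ac_simps)
  finally have "p * \<mu> = p * e" using smult_vec_right_cancel[OF v] by blast
  then show ?thesis using nonzero unfolding p_def by simp
qed

section \<open>Diagonalization of Hermitian matrices\<close>

lemma char_matrix_eq_minus_smult_one:
  "A \<in> carrier_mat n n \<Longrightarrow> char_matrix A a = A - a \<cdot>\<^sub>m 1\<^sub>m n"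
  unfolding char_matrix_def by (intro eq_matI) auto

lemma eigenvalue_iff_det_shift:
  fixes A :: "'a :: field mat"
  assumes A: "A \<in> carrier_mat n n"
  shows "eigenvalue A a \<longleftrightarrow> det (A - a \<cdot>\<^sub>m 1\<^sub>m n) = 0"
  unfolding eigenvalue_det[OF A] char_matrix_eq_minus_smult_one[OF A] ..

lemma eigenvalue_iff_order_char_poly:
  fixes A :: "'a :: field mat"
  assumes A: "A \<in> carrier_mat n n"
  shows "eigenvalue A a \<longleftrightarrow> order a (char_poly A) \<noteq> 0"
proof -
  have "char_poly A \<noteq> 0" using degree_monic_char_poly[OF A] by auto
  then show ?thesis unfolding eigenvalue_root_char_poly[OF A] order_root by simp
qed

lemma hermitian_dim_gen_eigenspace_2:
  assumes H: "hermitian_mat n H"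
  shows "dim_gen_eigenspace H (complex_of_real r) 2 = dim_gen_eigenspace H (complex_of_real r) 1"
proof -
  have "hermitian_mat n (char_matrix H (complex_of_real r))"
    unfolding char_matrix_eq_minus_smult_one[OF hermitian_mat_carrier[OF H]]
    by (rule hermitian_mat_minus_real_smult_one[OF H])
  from hermitian_mat_kernel_square[OF this] show ?thesis
    unfolding dim_gen_eigenspace_def kernel_dim_def by simp
qed

lemma jordan_nf_hermitian_block_size:
  assumes H: "hermitian_mat n H" and jnf: "jordan_nf H n_as" and block: "(m, a) \<in> set n_as"
  shows "m = 1"
proof -
  have C: "H \<in> carrier_mat n n" using hermitian_mat_carrier[OF H] .
  have "0 < m" using jnf block unfolding jordan_nf_def by force
  also have "m \<le> order a (char_poly H)" using jordan_nf_block_size_order_bound[OF jnf block] .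
  finally have "eigenvalue H a" unfolding eigenvalue_iff_order_char_poly[OF C] by simp
  then have "complex_of_real (Re a) = a" by (rule hermitian_eigenvalue_real[OF H])
  then have "dim_gen_eigenspace H a 2 = dim_gen_eigenspace H a 1"
    using hermitian_dim_gen_eigenspace_2[OF H, of "Re a"] by simp
  moreover define L where "L = map fst [(l, e)\<leftarrow>n_as. e = a]"
  have "(\<Sum>l\<leftarrow>L. min 2 l) = (\<Sum>l\<leftarrow>L. min 1 l) + (\<Sum>l\<leftarrow>L. min 2 l - min 1 l)"
    by (induction L) auto
  ultimately have "(\<Sum>l\<leftarrow>L. min 2 l - min 1 l) = 0"
    unfolding dim_gen_eigenspace[OF jnf] L_def by simp
  moreover have "m \<in> set L" using block unfolding L_def by force
  ultimately show ?thesis using \<open>0 < m\<close> by fastforce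
qed

lemma jordan_matrix_unit_blocks:
  assumes "\<forall>x \<in> set n_as. fst x = 1"
  shows "jordan_matrix n_as = mat_diag (length n_as) (\<lambda>i. snd (n_as ! i))"
  using assms
proof (induction n_as)
  case Nil
  show ?case by (intro eq_matI) (auto simp: mat_diag_def)
next
  case (Cons x n_as)
  obtain a where x: "x = (1, a)" using Cons.prems by (cases x) auto
  have "sum_list (map fst n_as) = length n_as" using Cons.prems by (induction n_as) auto
  then show ?case using Cons
    by (intro eq_matI) (auto simp: x jordan_matrix_Cons mat_diag_def jordan_block_def nth_Cons')
qed

lemma hermitian_diagonalization:
  assumes H: "hermitian_mat n H"
  obtains d P Q where "similar_mat_wit H (mat_diag n d) P Q"
    and "\<And>a. order a (char_poly H) = card {j. j < n \<and> d j = a}"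
proof -
  have C: "H \<in> carrier_mat n n" using hermitian_mat_carrier[OF H] .
  obtain n_as where jnf: "jordan_nf H n_as"
    using char_poly_factorized[OF C] jordan_nf_exists[OF C] by metis
  have unit: "\<forall>x \<in> set n_as. fst x = 1"
    using jordan_nf_hermitian_block_size[OF H jnf] by fastforce
  define d where "d = (\<lambda>i. snd (n_as ! i))"
  obtain P Q where sim: "similar_mat_wit H (mat_diag (length n_as) d) P Q"
    using jnf jordan_matrix_unit_blocks[OF unit] unfolding jordan_nf_def similar_mat_def d_def by auto
  have len: "length n_as = n"
    using similar_mat_witD2[OF C sim] by (metis carrier_matD(1) mat_diag_dim)
  have "order a (char_poly H) = card {j. j < n \<and> d j = a}" for a
  proof -
    have "order a (char_poly H) = sum_list (map fst (filter (\<lambda>x. snd x = a) n_as))"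
      by (rule jordan_nf_order[OF jnf])
    also have "\<dots> = length (filter (\<lambda>x. snd x = a) n_as)"
      using unit by (induction n_as) auto
    also have "\<dots> = card {j. j < n \<and> d j = a}"
      unfolding length_filter_conv_card d_def len ..
    finally show ?thesis .
  qed
  with sim show thesis using that len by simp
qed

lemma similar_mat_wit_col_row_nonzero:
  assumes H: "H \<in> carrier_mat n n" and sim: "similar_mat_wit H B P Q" and j: "j < n"
  obtains l where "l < n" "P $$ (l, j) \<noteq> 0" "Q $$ (j, l) \<noteq> 0"
proof -
  from similar_mat_witD2[OF H sim] have P: "P \<in> carrier_mat n n" and Q: "Q \<in> carrier_mat n n"
    and QP: "Q * P = 1\<^sub>m n" by blast+
  have "(\<Sum>l = 0..<n. Q $$ (j, l) * P $$ (l, j)) = (Q * P) $$ (j, j)"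
    using P Q j by (simp add: scalar_prod_def)
  also have "\<dots> = 1" unfolding QP using j by simp
  finally have sum: "(\<Sum>l = 0..<n. Q $$ (j, l) * P $$ (l, j)) = 1" .
  have "\<exists>l < n. P $$ (l, j) \<noteq> 0 \<and> Q $$ (j, l) \<noteq> 0"
  proof (rule ccontr)
    assume "\<not> ?thesis"
    then have "(\<Sum>l = 0..<n. Q $$ (j, l) * P $$ (l, j)) = 0" by (intro sum.neutral) auto
    with sum show False by simp
  qed
  then show thesis using that by blast
qed

lemma similar_mat_diag_col_eigenvector:
  fixes H :: "complex mat"
  assumes H: "H \<in> carrier_mat n n" and sim: "similar_mat_wit H (mat_diag n d) P Q" and j: "j < n"
  shows "H *\<^sub>v col P j = d j \<cdot>\<^sub>v col P j"
proof -
  from similar_mat_witD2[OF H sim] have P: "P \<in> carrier_mat n n" and Q: "Q \<in> carrier_mat n n"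
    and QP: "Q * P = 1\<^sub>m n" and H_eq: "H = P * mat_diag n d * Q" by blast+
  have "H * P = P * mat_diag n d * (Q * P)"
    unfolding H_eq using P Q by (intro assoc_mult_mat[of _ n n _ n _ n]) auto
  also have "\<dots> = P * mat_diag n d"
    unfolding QP using P by (intro right_mult_one_mat[of _ n n]) simp
  finally have HP: "H * P = P * mat_diag n d" .
  have "H *\<^sub>v col P j = col (H * P) j" using col_mult2[OF H P j] by simp
  also have "\<dots> = d j \<cdot>\<^sub>v col P j"
    unfolding HP mat_diag_mult_right[OF P] using P j by (intro eq_vecI) auto
  finally show ?thesis .
qed

lemma mat_diag_single_entry_conj:
  assumes P: "P \<in> carrier_mat n n" and Q: "Q \<in> carrier_mat n n" and j0: "j0 < n"
  shows "P * mat_diag n (\<lambda>j. if j = j0 then c else 0) * Q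
    = mat n n (\<lambda>(i, l). P $$ (i, j0) * (c * Q $$ (j0, l)))"
proof (rule eq_matI)
  fix i l assume "i < dim_row (mat n n (\<lambda>(i, l). P $$ (i, j0) * (c * Q $$ (j0, l))))"
    "l < dim_col (mat n n (\<lambda>(i, l). P $$ (i, j0) * (c * Q $$ (j0, l))))"
  then have il: "i < n" "l < n" by auto
  have "(P * mat_diag n (\<lambda>j. if j = j0 then c else 0) * Q) $$ (i, l)
    = (\<Sum>j = 0..<n. P $$ (i, j) * (if j = j0 then c else 0) * Q $$ (j, l))"
    using P Q il by (simp add: mat_diag_mult_right[OF P] scalar_prod_def)
  also have "\<dots> = P $$ (i, j0) * (c * Q $$ (j0, l))"
    using j0 by (simp add: if_distrib if_distribR sum.delta' mult.assoc cong: if_cong)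
  finally show "(P * mat_diag n (\<lambda>j. if j = j0 then c else 0) * Q) $$ (i, l)
    = mat n n (\<lambda>(i, l). P $$ (i, j0) * (c * Q $$ (j0, l))) $$ (i, l)" using il by simp
qed (use P Q in auto)

lemma hermitian_shift_prod_single_root:
  assumes H: "hermitian_mat n H" and sim: "similar_mat_wit H (mat_diag n d) P Q" and j0: "j0 < n"
    and roots: "\<And>j. j < n \<Longrightarrow> j \<noteq> j0 \<Longrightarrow> (\<Prod>i\<leftarrow>xs. d j - complex_of_real (r i)) = 0"
    and nonroot: "(\<Prod>i\<leftarrow>xs. d j0 - complex_of_real (r i)) \<noteq> 0"
  shows "\<exists>b. b \<noteq> 0 \<and> shift_prod n H (\<lambda>i. complex_of_real (r i)) xs = b \<cdot>\<^sub>m outer_adj (col P j0)"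
proof -
  have C: "H \<in> carrier_mat n n" using hermitian_mat_carrier[OF H] .
  from similar_mat_witD2[OF C sim] have P: "P \<in> carrier_mat n n" and Q: "Q \<in> carrier_mat n n"
    by blast+
  let ?c = "\<lambda>i. complex_of_real (r i)"
  define cc where "cc = (\<Prod>i\<leftarrow>xs. d j0 - ?c i)"
  have "shift_prod n H ?c xs = P * mat_diag n (\<lambda>j. \<Prod>i\<leftarrow>xs. d j - ?c i) * Q"
    unfolding shift_prod_similar[OF C sim] shift_prod_mat_diag ..
  also have "mat_diag n (\<lambda>j. \<Prod>i\<leftarrow>xs. d j - ?c i) = mat_diag n (\<lambda>j. if j = j0 then cc else 0)"
    using roots unfolding cc_def by (intro eq_matI) (auto simp: mat_diag_def)
  also have "P * \<dots> * Q = mat n n (\<lambda>(i, l). col P j0 $ i * (cc * Q $$ (j0, l)))"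
    unfolding mat_diag_single_entry_conj[OF P Q j0] using P j0 by (intro eq_matI) auto
  finally have prod: "shift_prod n H ?c xs = mat n n (\<lambda>(i, l). col P j0 $ i * (cc * Q $$ (j0, l)))" .
  obtain l where l: "l < n" "P $$ (l, j0) \<noteq> 0" "Q $$ (j0, l) \<noteq> 0"
    using similar_mat_wit_col_row_nonzero[OF C sim j0] .
  have y: "col P j0 \<in> carrier_vec n" "col P j0 $ l \<noteq> 0" using P l j0 by auto
  have herm: "hermitian_mat n (mat n n (\<lambda>(i, l). col P j0 $ i * (cc * Q $$ (j0, l))))"
    using hermitian_shift_prod[OF H, of r xs] unfolding prod .
  have "cc * Q $$ (j0, l) \<noteq> 0" using nonroot l(3) unfolding cc_def by simp
  from hermitian_rank_one_outer_adj[OF herm y(1) l(1) y(2) l(1) this] show ?thesis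
    unfolding prod .
qed

section \<open>The characterization\<close>

lemma bij_betw_atLeastAtMost_fix_first:
  assumes A: "finite A" "a \<in> A" "card A = k"
  obtains f where "bij_betw f {1..k} A" "f 1 = a"
proof -
  have "card {2..k} = card (A - {a})" using A by simp
  then obtain h where h: "bij_betw h {2..k} (A - {a})"
    using A(1) finite_same_card_bij by (metis finite_Diff finite_atLeastAtMost)
  define f where "f i = (if i = 1 then a else h i)" for i :: nat
  have "bij_betw f {2..k} (A - {a})" using h by (rule bij_betw_cong[THEN iffD1, rotated]) (simp add: f_def)
  then have "bij_betw f ({2..k} \<union> {1}) ((A - {a}) \<union> {f 1})"
    by (subst notIn_Un_bij_betw3[symmetric]) (auto simp: f_def)
  moreover have "{2..k} \<union> {1} = {1..k}" "(A - {a}) \<union> {f 1} = A"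
    using A card_gt_0_iff[of A] by (auto simp: f_def)
  ultimately show thesis using that f_def by simp
qed

lemma hermitian_eigenvalue_enumeration:
  assumes H: "hermitian_mat n H" and card: "card {\<mu>. eigenvalue H \<mu>} = k" and "0 < k"
    and r: "eigenvalue H (complex_of_real r)"
  obtains lam where "inj_on lam {1..k}" "complex_of_real ` lam ` {1..k} = {\<mu>. eigenvalue H \<mu>}"
    and "lam 1 = r"
proof -
  have "finite {\<mu>. eigenvalue H \<mu>}" using card \<open>0 < k\<close> card.infinite by force
  then obtain f where f: "bij_betw f {1..k} {\<mu>. eigenvalue H \<mu>}" and f1: "f 1 = complex_of_real r"
    using bij_betw_atLeastAtMost_fix_first card r by (metis mem_Collect_eq)
  define lam where "lam i = Re (f i)" for i
  have f_real: "complex_of_real (lam i) = f i" if "i \<in> {1..k}" for i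
    unfolding lam_def using hermitian_eigenvalue_real[OF H] bij_betw_apply[OF f that] by simp
  have "inj_on lam {1..k}"
    using bij_betw_imp_inj_on[OF f] f_real by (metis inj_on_def)
  moreover have "complex_of_real ` lam ` {1..k} = f ` {1..k}"
    unfolding image_image using f_real by (intro image_cong) auto
  then have "complex_of_real ` lam ` {1..k} = {\<mu>. eigenvalue H \<mu>}"
    using bij_betw_imp_surj_on[OF f] by simp
  moreover have "lam 1 = r" unfolding lam_def f1 by simp
  ultimately show thesis by (rule that)
qed

lemma prod_list_minus_zero_iff:
  fixes lam :: "nat \<Rightarrow> real"
  assumes inj: "inj_on lam {1..k}" and "z \<in> (\<lambda>i. complex_of_real (lam i)) ` {1..k}"
  shows "(\<Prod>i\<leftarrow>[2..<Suc k]. z - complex_of_real (lam i)) = 0 \<longleftrightarrow> z \<noteq> complex_of_real (lam 1)"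
proof -
  obtain i0 where i0: "i0 \<in> {1..k}" and z: "z = complex_of_real (lam i0)" using assms(2) by blast
  have "(\<Prod>i\<leftarrow>[2..<Suc k]. complex_of_real (lam i0) - complex_of_real (lam i)) = 0
    \<longleftrightarrow> (\<exists>i \<in> {2..k}. lam i0 = lam i)"
    unfolding prod_list_zero_iff list.set_map set_upt atLeastLessThanSuc_atLeastAtMost by force
  also have "\<dots> \<longleftrightarrow> lam i0 \<noteq> lam 1"
  proof
    assume "\<exists>i \<in> {2..k}. lam i0 = lam i"
    then obtain i where "i \<in> {2..k}" "lam i0 = lam i" by blast
    then show "lam i0 \<noteq> lam 1" using inj_onD[OF inj, of i 1] by auto
  next
    assume "lam i0 \<noteq> lam 1"
    then have "i0 \<in> {2..k}" using i0 by (cases "i0 = 1") auto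
    then show "\<exists>i \<in> {2..k}. lam i0 = lam i" by blast
  qed
  finally show ?thesis unfolding z by simp
qed

lemma eig_conditions_if_card_eigenvalues:
  assumes H: "hermitian_mat n H" and simple: "largest_eigenvalue_simple H"
    and card: "card {\<mu>. eigenvalue H \<mu>} = k" and "0 < k"
  shows "\<exists>lam. eig_conditions n H k lam"
proof -
  have C: "H \<in> carrier_mat n n" using hermitian_mat_carrier[OF H] .
  obtain r where r: "eigenvalue H (complex_of_real r)" and r1: "order (complex_of_real r) (char_poly H) = 1"
    using simple unfolding largest_eigenvalue_simple_def by blast
  obtain d P Q where sim: "similar_mat_wit H (mat_diag n d) P Q"
    and mult: "\<And>a. order a (char_poly H) = card {j. j < n \<and> d j = a}"
    using hermitian_diagonalization[OF H] by blast
  have "card {j. j < n \<and> d j = complex_of_real r} = Suc 0" using r1 mult by simp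
  then obtain j0 where j0: "{j. j < n \<and> d j = complex_of_real r} = {j0}"
    unfolding card_1_singleton_iff by blast
  then have "j0 < n" "d j0 = complex_of_real r" by auto
  obtain lam where inj: "inj_on lam {1..k}"
    and spec: "complex_of_real ` lam ` {1..k} = {\<mu>. eigenvalue H \<mu>}" and lam1: "lam 1 = r"
    using hermitian_eigenvalue_enumeration[OF H card \<open>0 < k\<close> r] by blast
  let ?c = "\<lambda>i. complex_of_real (lam i)"
  have d_spec: "d j \<in> ?c ` {1..k}" if "j < n" for j
  proof -
    have "order (d j) (char_poly H) \<noteq> 0" unfolding mult using that by (subst card_0_eq) auto
    then show ?thesis using spec unfolding eigenvalue_iff_order_char_poly[OF C, symmetric] by auto
  qed
  have roots: "(\<Prod>i\<leftarrow>[2..<Suc k]. d j - ?c i) = 0" if "j < n" "j \<noteq> j0" for j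
    using prod_list_minus_zero_iff[OF inj d_spec] j0 that lam1 by blast
  have nonroot: "(\<Prod>i\<leftarrow>[2..<Suc k]. d j0 - ?c i) \<noteq> 0"
    using prod_list_minus_zero_iff[OF inj d_spec[OF \<open>j0 < n\<close>]] \<open>d j0 = complex_of_real r\<close> lam1 by simp
  obtain b where b: "b \<noteq> 0" and prod: "shifted_prod n H lam k = b \<cdot>\<^sub>m outer_adj (col P j0)"
    using hermitian_shift_prod_single_root[OF H sim \<open>j0 < n\<close> roots nonroot]
    unfolding shifted_prod_eq_shift_prod by blast
  have P: "P \<in> carrier_mat n n" using similar_mat_witD2[OF C sim] by blast
  obtain l where l: "l < n" "P $$ (l, j0) \<noteq> 0"
    using similar_mat_wit_col_row_nonzero[OF C sim \<open>j0 < n\<close>] by blast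
  then have "col P j0 $ l \<noteq> 0" using P \<open>j0 < n\<close> by simp
  then have "col P j0 \<noteq> 0\<^sub>v n" using l(1) by auto
  moreover have "H *\<^sub>v col P j0 = complex_of_real (lam 1) \<cdot>\<^sub>v col P j0"
    using similar_mat_diag_col_eigenvector[OF C sim \<open>j0 < n\<close>] \<open>d j0 = complex_of_real r\<close> lam1 by simp
  moreover have "det (H - ?c i \<cdot>\<^sub>m 1\<^sub>m n) = 0" if "i \<in> {2..k}" for i
    using spec that unfolding eigenvalue_iff_det_shift[OF C, symmetric] by auto
  moreover have "col P j0 \<in> carrier_vec n" using P by auto
  ultimately show ?thesis unfolding eig_conditions_def using inj b prod by blast
qed

lemma eigenvalues_if_eig_conditions:
  assumes C: "H \<in> carrier_mat n n" and "0 < k" and cond: "eig_conditions n H k lam"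
  shows "{\<mu>. eigenvalue H \<mu>} = complex_of_real ` lam ` {1..k}"
proof -
  let ?c = "\<lambda>i. complex_of_real (lam i)"
  from cond obtain b y where det: "\<forall>i\<in>{2..k}. det (H - ?c i \<cdot>\<^sub>m 1\<^sub>m n) = 0"
    and y: "y \<in> carrier_vec n" "y \<noteq> 0\<^sub>v n"
    and prod: "shifted_prod n H lam k = b \<cdot>\<^sub>m outer_adj y" and Hy: "H *\<^sub>v y = ?c 1 \<cdot>\<^sub>v y"
    unfolding eig_conditions_def by blast
  have "\<mu> \<in> ?c ` {1..k}" if ev: "eigenvalue H \<mu>" for \<mu>
  proof (rule ccontr)
    assume \<mu>: "\<mu> \<notin> ?c ` {1..k}"
    obtain v where v: "v \<in> carrier_vec n" "v \<noteq> 0\<^sub>v n" and Hv: "H *\<^sub>v v = \<mu> \<cdot>\<^sub>v v"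
      using ev C unfolding eigenvalue_def eigenvector_def by auto
    have "(\<Prod>i\<leftarrow>[2..<Suc k]. \<mu> - ?c i) \<noteq> 0" using \<mu> unfolding prod_list_zero_iff by auto
    with prod have "\<mu> = ?c 1"
      unfolding shifted_prod_eq_shift_prod by (rule eigenvalue_eq_if_shift_prod_outer_adj[OF C y(1) _ Hy v Hv])
    then show False using \<mu> \<open>0 < k\<close> by auto
  qed
  moreover have "eigenvalue H (?c i)" if "i \<in> {1..k}" for i
  proof (cases "i = 1")
    case True
    then show ?thesis using y Hy C unfolding eigenvalue_def eigenvector_def by auto
  next
    case False
    then show ?thesis using that det unfolding eigenvalue_iff_det_shift[OF C] by auto
  qed
  ultimately show ?thesis unfolding image_image by auto
qed

theorem theorem2p6:
  fixes n k :: nat and H :: "complex mat"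
  assumes "hermitian_mat n H"
    and "largest_eigenvalue_simple H"
    and "2 \<le> k" and "k \<le> n"
  shows "(card {\<mu>. eigenvalue H \<mu>} = k \<longleftrightarrow> (\<exists>lam. eig_conditions n H k lam))
    \<and> (\<forall>lam. eig_conditions n H k lam \<longrightarrow>
          {\<mu>. eigenvalue H \<mu>} = complex_of_real ` lam ` {1..k})"
proof -
  have C: "H \<in> carrier_mat n n" using hermitian_mat_carrier[OF assms(1)] .
  have "0 < k" using assms(3) by simp
  have spectrum: "{\<mu>. eigenvalue H \<mu>} = complex_of_real ` lam ` {1..k}"
    if "eig_conditions n H k lam" for lam
    using eigenvalues_if_eig_conditions[OF C \<open>0 < k\<close> that] .
  have "card {\<mu>. eigenvalue H \<mu>} = k" if "eig_conditions n H k lam" for lam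
  proof -
    have inj: "inj_on lam {1..k}" using that unfolding eig_conditions_def by blast
    have "card (complex_of_real ` lam ` {1..k}) = card (lam ` {1..k})"
      by (rule card_image) (simp add: inj_on_def)
    also have "\<dots> = k" using card_image[OF inj] by simp
    finally show ?thesis unfolding spectrum[OF that] .
  qed
  moreover have "\<exists>lam. eig_conditions n H k lam" if "card {\<mu>. eigenvalue H \<mu>} = k"
    using eig_conditions_if_card_eigenvalues[OF assms(1,2) that \<open>0 < k\<close>] .
  ultimately show ?thesis using spectrum by blast
qed

end
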